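(* For every $\Gamma>0$, the function $(\boldsymbol{x}_1,\boldsymbol{x}_2)\mapsto \mathrm{IEM}(\boldsymbol{x}_1,\boldsymbol{x}_2,\Gamma)$ is a distance metric on $\mathbb{R}^d$. That is, for all $\boldsymbol{x}_1,\boldsymbol{x}_2,\boldsymbol{x}_3\in\mathbb{R}^d$: (i) $\mathrm{IEM}(\boldsymbol{x}_1,\boldsymbol{x}_2,\Gamma)=\mathrm{IEM}(\boldsymbol{x}_2,\boldsymbol{x}_1,\Gamma)$; (ii) $\mathrm{IEM}(\boldsymbol{x}_1,\boldsymbol{x}_2,\Gamma)\ge 0$; (iii) $\mathrm{IEM}(\boldsymbol{x}_1,\boldsymbol{x}_2,\Gamma)=0$ if and only if $\boldsymbol{x}_1=\boldsymbol{x}_2$; (iv) $\mathrm{IEM}(\boldsymbol{x}_1,\boldsymbol{x}_3,\Gamma)\le \mathrm{IEM}(\boldsymbol{x}_1,\boldsymbol{x}_2,\Gamma)+\mathrm{IEM}(\boldsymbol{x}_2,\boldsymbol{x}_3,\Gamma)$.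
   Context: Let $\mathbf{x}$ be a random vector in $\mathbb{R}^d$ with probability density $p_{\mathbf{x}}$. For $\gamma\ge 0$ define the Gaussian channel $\mathbf{y}_\gamma=\gamma\mathbf{x}+\mathbf{w}_\gamma$, where $(\mathbf{w}_\gamma)_{\gamma\ge0}$ is a standard Wiener process in $\mathbb{R}^d$ (so $\mathbf{w}_\gamma\sim\mathcal N(\mathbf{0},\gamma \boldsymbol I)$) independent of $\mathbf{x}$. For $\gamma>0$, $p_{\mathbf{y}_\gamma}$ denotes the (smooth, strictly positive) density of $\mathbf{y}_\gamma$, i.e. the density of $\gamma\mathbf{x}$ convolved with the $\mathcal N(\mathbf 0,\gamma \boldsymbol I)$ density, and $\nabla\log p_{\mathbf{y}_\gamma}$ is its score (gradient of its logarithm). The Information-Estimation Metric is $$\mathrm{IEM}(\boldsymbol{x}_1,\boldsymbol{x}_2,\Gamma)=\Big(\int_0^{\Gamma}\mathbb{E}\big[\|\nabla\log p_{\mathbf{y}_\gamma}(\gamma\boldsymbol{x}_1+\mathbf{w}_\gamma)-\nabla\log p_{\mathbf{y}_\gamma}(\gamma\boldsymbol{x}_2+\mathbf{w}_\gamma)\|^2\big]\,d\gamma\Big)^{1/2},$$ where for each $\gamma$ the expectation is over $\mathbf{w}_\gamma\sim\mathcal N(\mathbf 0,\gamma\boldsymbol I)$. It is assumed that this integral is finite for all $\boldsymbol{x}_1,\boldsymbol{x}_2$. *)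

theory Defs
  imports "HOL-Analysis.Analysis"
begin

definition gauss_dens :: "real \<Rightarrow> 'a::euclidean_space \<Rightarrow> real" where
  "gauss_dens \<gamma> w = (2 * pi * \<gamma>) powr (- real DIM('a) / 2) * exp (- (norm w)\<^sup>2 / (2 * \<gamma>))"

definition is_density :: "('a::euclidean_space \<Rightarrow> real) \<Rightarrow> bool" where
  "is_density p \<longleftrightarrow> p \<in> borel_measurable lborel \<and> (\<forall>x. 0 \<le> p x)
      \<and> (\<integral>\<^sup>+ x. ennreal (p x) \<partial>lborel) = 1"

text \<open>Density of y_gamma = gamma x + w_gamma: density of gamma x convolved with N(0, gamma I),
  i.e. p_y(y) = E_x[phi_gamma(y - gamma x)].\<close>
definition py :: "('a::euclidean_space \<Rightarrow> real) \<Rightarrow> real \<Rightarrow> 'a \<Rightarrow> real" where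
  "py p \<gamma> y = (\<integral> x. p x * gauss_dens \<gamma> (y - \<gamma> *\<^sub>R x) \<partial>lborel)"

text \<open>Score: gradient of log p_y (gradient = Riesz representer of the Frechet derivative).\<close>
definition score :: "('a::euclidean_space \<Rightarrow> real) \<Rightarrow> real \<Rightarrow> 'a \<Rightarrow> 'a" where
  "score p \<gamma> y = (\<Sum>b\<in>Basis. frechet_derivative (\<lambda>z. ln (py p \<gamma> z)) (at y) b *\<^sub>R b)"

definition IEM_sq :: "('a::euclidean_space \<Rightarrow> real) \<Rightarrow> 'a \<Rightarrow> 'a \<Rightarrow> real \<Rightarrow> ennreal" where
  "IEM_sq p x1 x2 \<Gamma> = (\<integral>\<^sup>+ \<gamma>. (\<integral>\<^sup>+ w. ennreal (gauss_dens \<gamma> w *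
       (norm (score p \<gamma> (\<gamma> *\<^sub>R x1 + w) - score p \<gamma> (\<gamma> *\<^sub>R x2 + w)))\<^sup>2) \<partial>lborel)
     \<partial>(restrict_space lborel {0<..\<Gamma>}))"

definition IEM :: "('a::euclidean_space \<Rightarrow> real) \<Rightarrow> 'a \<Rightarrow> 'a \<Rightarrow> real \<Rightarrow> real" where
  "IEM p x1 x2 \<Gamma> = sqrt (enn2real (IEM_sq p x1 x2 \<Gamma>))"

end

theory Submission
  imports Defs "HOL-Real_Asymp.Real_Asymp"
begin

(*
  For the triangle inequality, integrate the pointwise bound
  |a - c|^2 <= (1 + t) |a - b|^2 + (1 + 1/t) |b - c|^2 to get the same bound for the squared
  metrics, and optimise over t > 0.

  Definiteness rests on the regularity of the smoothed density p_gamma = p * N(0, gamma I): it is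
  positive and differentiable with Lipschitz gradient, so its score s_gamma is continuous.  If
  IEM(x1, x2) = 0, then for some gamma the scores s_gamma(gamma x1 + w) and s_gamma(gamma x2 + w)
  agree for almost every w, hence for every w, i.e. s_gamma is periodic with period
  v = gamma (x1 - x2).  Then ln p_gamma(y + v) - ln p_gamma(y) is a constant c, so
  p_gamma(n v) p_gamma(-n v) = p_gamma(0)^2 for all n.  By dominated convergence p_gamma vanishes
  along every ray, which forces v = 0.
*)

lemma norm_diff_sq_le_weighted:
  fixes a b c :: "'a::real_normed_vector"
  assumes "0 < t"
  shows "(norm (a - c))\<^sup>2 \<le> (1 + t) * (norm (a - b))\<^sup>2 + (1 + 1 / t) * (norm (b - c))\<^sup>2"
proof -
  define u v where "u = norm (a - b)" and "v = norm (b - c)"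
  have "norm (a - c) \<le> u + v"
    unfolding u_def v_def using norm_triangle_ineq[of "a - b" "b - c"] by simp
  then have "(norm (a - c))\<^sup>2 \<le> (u + v)\<^sup>2"
    by (rule power_mono) simp
  also have "\<dots> \<le> (1 + t) * u\<^sup>2 + (1 + 1 / t) * v\<^sup>2"
  proof -
    have "0 \<le> (t * u - v)\<^sup>2 / t"
      using assms by simp
    then have "2 * u * v \<le> t * u\<^sup>2 + v\<^sup>2 / t"
      using assms by (simp add: power2_eq_square field_simps)
    then show ?thesis
      by (simp add: power2_eq_square algebra_simps)
  qed
  finally show ?thesis
    by (simp only: u_def v_def)
qed

lemma ennreal_scaled_norm_diff_sq_le_weighted:
  fixes a b c :: "'a::real_normed_vector"
  assumes "0 \<le> g" "0 < t"
  shows "ennreal (g * (norm (a - c))\<^sup>2)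
    \<le> ennreal (1 + t) * ennreal (g * (norm (a - b))\<^sup>2) + ennreal (1 + 1 / t) * ennreal (g * (norm (b - c))\<^sup>2)"
proof -
  have "g * (norm (a - c))\<^sup>2 \<le> g * ((1 + t) * (norm (a - b))\<^sup>2 + (1 + 1 / t) * (norm (b - c))\<^sup>2)"
    using assms norm_diff_sq_le_weighted by (intro mult_left_mono) auto
  also have "\<dots> = (1 + t) * (g * (norm (a - b))\<^sup>2) + (1 + 1 / t) * (g * (norm (b - c))\<^sup>2)"
    by (simp only: distrib_left mult.left_commute)
  finally have "ennreal (g * (norm (a - c))\<^sup>2)
      \<le> ennreal ((1 + t) * (g * (norm (a - b))\<^sup>2) + (1 + 1 / t) * (g * (norm (b - c))\<^sup>2))"
    by (rule ennreal_leI)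
  moreover have "0 \<le> 1 + t" "0 \<le> 1 + 1 / t" "0 \<le> g * (norm (a - b))\<^sup>2" "0 \<le> g * (norm (b - c))\<^sup>2"
    using assms by simp_all
  ultimately show ?thesis
    by (simp only: ennreal_plus mult_nonneg_nonneg ennreal_mult)
qed

lemma sqrt_le_add_sqrt_if_weighted_bound:
  fixes a b c :: real
  assumes "0 \<le> a" "0 \<le> b"
    and weighted: "\<And>t. 0 < t \<Longrightarrow> c \<le> (1 + t) * a + (1 + 1 / t) * b"
  shows "sqrt c \<le> sqrt a + sqrt b"
proof (rule field_le_epsilon)
  fix e :: real
  assume "0 < e"
  define s r where "s = sqrt a + e / 2" and "r = sqrt b + e / 2"
  have "0 < s" "0 < r"
    using assms(1,2) \<open>0 < e\<close> by (simp_all add: s_def r_def add_nonneg_pos)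
  have "a \<le> s\<^sup>2" "b \<le> r\<^sup>2"
    using assms(1,2) \<open>0 < e\<close> power_mono[of "sqrt a" s 2] power_mono[of "sqrt b" r 2]
    by (simp_all add: s_def r_def)
  \<comment> \<open>\<open>t = r / s\<close> is the optimal weight for \<open>a = s\<^sup>2\<close>, \<open>b = r\<^sup>2\<close>\<close>
  have "c \<le> (1 + r / s) * a + (1 + s / r) * b"
    using weighted[of "r / s"] \<open>0 < s\<close> \<open>0 < r\<close> by simp
  also have "\<dots> \<le> (1 + r / s) * s\<^sup>2 + (1 + s / r) * r\<^sup>2"
    using \<open>0 < s\<close> \<open>0 < r\<close> \<open>a \<le> s\<^sup>2\<close> \<open>b \<le> r\<^sup>2\<close>
    by (intro add_mono mult_left_mono) auto
  also have "\<dots> = (s + r)\<^sup>2"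
    using \<open>0 < s\<close> \<open>0 < r\<close> by (simp add: power2_eq_square field_simps)
  finally have "sqrt c \<le> s + r"
    using \<open>0 < s\<close> \<open>0 < r\<close> real_sqrt_le_mono by fastforce
  then show "sqrt c \<le> sqrt a + sqrt b + e"
    by (simp add: s_def r_def)
qed

lemma lipschitz_gradient_remainder_le:
  fixes f :: "'a::real_inner \<Rightarrow> real"
  assumes deriv: "\<And>x. (f has_derivative (\<lambda>h. f' x \<bullet> h)) (at x)"
    and lip: "L-lipschitz_on UNIV f'"
  shows "\<bar>f (z + h) - f z - f' z \<bullet> h\<bar> \<le> L * (norm h)\<^sup>2"
proof -
  have "norm (f (z + h) - f z - f' z \<bullet> ((z + h) - z)) \<le> norm ((z + h) - z) * (L * norm h)"
  proof (rule differentiable_bound_linearization[where S = "closed_segment z (z + h)"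
        and f' = "\<lambda>x k. f' x \<bullet> k"])
    show "\<And>x. (f has_derivative (\<lambda>k. f' x \<bullet> k)) (at x within closed_segment z (z + h))"
      using deriv has_derivative_at_withinI by blast
    show "\<And>t. t \<in> {0..1} \<Longrightarrow> z + t *\<^sub>R (z + h - z) \<in> closed_segment z (z + h)"
      by (auto simp: closed_segment_def algebra_simps)
    fix x
    assume "x \<in> closed_segment z (z + h)"
    then have "norm (x - z) \<le> norm h"
      using segment_bound1 by fastforce
    show "onorm ((\<lambda>k. f' x \<bullet> k) - (\<lambda>k. f' z \<bullet> k)) \<le> L * norm h"
    proof (rule onorm_bound)
      show "0 \<le> L * norm h"
        using lipschitz_on_nonneg[OF lip] by simp
      fix k
      have "\<bar>(f' x - f' z) \<bullet> k\<bar> \<le> norm (f' x - f' z) * norm k"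
        by (rule Cauchy_Schwarz_ineq2)
      also have "\<dots> \<le> L * norm (x - z) * norm k"
        using lipschitz_on_normD[OF lip] by (simp add: mult_right_mono)
      also have "\<dots> \<le> L * norm h * norm k"
        using \<open>norm (x - z) \<le> norm h\<close> lipschitz_on_nonneg[OF lip]
        by (intro mult_right_mono mult_left_mono) auto
      finally show "norm (((\<lambda>k. f' x \<bullet> k) - (\<lambda>k. f' z \<bullet> k)) k) \<le> L * norm h * norm k"
        by (simp add: inner_diff_left)
    qed
  qed simp
  then show ?thesis
    by (simp add: power2_eq_square mult_ac)
qed

lemma has_derivative_if_quadratic_remainder:
  assumes "bounded_linear f'"
    and remainder: "\<And>h. norm (f (x + h) - f x - f' h) \<le> K * (norm h)\<^sup>2"
  shows "(f has_derivative f') (at x)"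
  unfolding has_derivative_at_alt
proof (intro conjI allI impI)
  fix e :: real
  assume "0 < e"
  define d where "d = e / (\<bar>K\<bar> + 1)"
  show "\<exists>d>0. \<forall>y. norm (y - x) < d \<longrightarrow> norm (f y - f x - f' (y - x)) \<le> e * norm (y - x)"
  proof (intro exI conjI allI impI)
    show "0 < d"
      using \<open>0 < e\<close> by (simp add: d_def)
    fix y
    assume "norm (y - x) < d"
    then have "\<bar>K\<bar> * norm (y - x) + norm (y - x) \<le> e"
      by (simp add: d_def field_simps)
    then have "\<bar>K\<bar> * norm (y - x) \<le> e"
      using norm_ge_zero[of "y - x"] by linarith
    have "norm (f y - f x - f' (y - x)) \<le> K * (norm (y - x))\<^sup>2"
      using remainder[of "y - x"] by simp
    also have "\<dots> \<le> (\<bar>K\<bar> * norm (y - x)) * norm (y - x)"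
      by (simp add: power2_eq_square mult.assoc mult_right_mono)
    also have "\<dots> \<le> e * norm (y - x)"
      using \<open>\<bar>K\<bar> * norm (y - x) \<le> e\<close> by (rule mult_right_mono) simp
    finally show "norm (f y - f x - f' (y - x)) \<le> e * norm (y - x)" .
  qed
qed (fact assms)

lemma filterlim_scaleR_real_at_infinity:
  fixes v :: "'a::real_normed_vector"
  assumes "v \<noteq> 0"
  shows "filterlim (\<lambda>n. real n *\<^sub>R v) at_infinity sequentially"
proof -
  have "filterlim (\<lambda>n. real n * norm v) at_top sequentially"
    using assms by real_asymp
  then show ?thesis
    by (simp add: filterlim_at_infinity_conv_norm_at_top)
qed

lemma nn_integral_le_weighted_sum:
  fixes a b :: ennreal
  assumes [measurable]: "f \<in> borel_measurable M" "g \<in> borel_measurable M"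
    and "\<And>x. x \<in> space M \<Longrightarrow> h x \<le> a * f x + b * g x"
  shows "(\<integral>\<^sup>+x. h x \<partial>M) \<le> a * (\<integral>\<^sup>+x. f x \<partial>M) + b * (\<integral>\<^sup>+x. g x \<partial>M)"
proof -
  have "(\<integral>\<^sup>+x. h x \<partial>M) \<le> (\<integral>\<^sup>+x. a * f x + b * g x \<partial>M)"
    using assms(3) by (rule nn_integral_mono)
  also have "\<dots> = a * (\<integral>\<^sup>+x. f x \<partial>M) + b * (\<integral>\<^sup>+x. g x \<partial>M)"
    by (simp add: nn_integral_add nn_integral_cmult)
  finally show ?thesis .
qed

lemma nn_integral_eq_0_obtains_zero:
  assumes "f \<in> borel_measurable M" "(\<integral>\<^sup>+x. f x \<partial>M) = 0" "emeasure M (space M) \<noteq> 0"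
  obtains x where "x \<in> space M" "f x = 0"
proof (rule ccontr)
  assume "\<not> thesis"
  then have "{x \<in> space M. \<not> f x = 0} = space M"
    using that by blast
  moreover have "AE x in M. f x = 0"
    using assms(1,2) by (simp add: nn_integral_0_iff_AE)
  ultimately show False
    using assms(3) by (simp add: AE_iff_measurable[OF sets.top])
qed

lemma continuous_AE_eq_imp_eq:
  fixes f g :: "'a::euclidean_space \<Rightarrow> 'b::euclidean_space"
  assumes "continuous_on UNIV f" "continuous_on UNIV g" "AE x in lborel. f x = g x"
  shows "f x = g x"
proof (rule ccontr)
  let ?U = "{x. f x \<noteq> g x}"
  assume "f x \<noteq> g x"
  have "open ?U"
    using assms(1,2) by (rule open_Collect_neq)
  moreover have "?U \<in> null_sets lborel"
    using assms(3) \<open>open ?U\<close> by (simp add: AE_iff_null)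
  then have "negligible ?U"
    by (simp add: negligible_iff_null_sets null_sets_completionI)
  ultimately show False
    using open_not_negligible \<open>f x \<noteq> g x\<close> by blast
qed

section \<open>The Gaussian kernel\<close>

lemma gauss_dens_eq:
  "gauss_dens \<gamma> (z::'a::euclidean_space) = gauss_dens \<gamma> (0::'a) * exp (- (norm z)\<^sup>2 / (2 * \<gamma>))"
  by (simp add: gauss_dens_def)

lemma gauss_dens_pos: "0 < \<gamma> \<Longrightarrow> 0 < gauss_dens \<gamma> z"
  by (simp add: gauss_dens_def)

lemma gauss_dens_le_peak:
  assumes "0 < \<gamma>"
  shows "gauss_dens \<gamma> (z::'a::euclidean_space) \<le> gauss_dens \<gamma> (0::'a)"
proof -
  have "gauss_dens \<gamma> z = gauss_dens \<gamma> (0::'a) * exp (- (norm z)\<^sup>2 / (2 * \<gamma>))"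
    by (rule gauss_dens_eq)
  also have "\<dots> \<le> gauss_dens \<gamma> (0::'a) * 1"
    using assms gauss_dens_pos[OF assms, of "0::'a"] by (intro mult_left_mono) auto
  finally show ?thesis by simp
qed

lemma gauss_dens_measurable [measurable]:
  "f \<in> borel_measurable M \<Longrightarrow> g \<in> borel_measurable M \<Longrightarrow>
    (\<lambda>x. gauss_dens (f x) (g x :: 'a::euclidean_space)) \<in> borel_measurable M"
proof -
  assume [measurable]: "f \<in> borel_measurable M" "g \<in> borel_measurable M"
  have "(\<lambda>x. exp (- (norm (g x))\<^sup>2 / (2 * f x))) \<in> borel_measurable M"
    by (rule measurable_compose[OF _ borel_measurable_exp]) measurable
  moreover have "(\<lambda>x. (2 * pi * f x) powr (- real DIM('a) / 2)) \<in> borel_measurable M"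
    by (intro powr_real_measurable) measurable
  ultimately show ?thesis
    unfolding gauss_dens_def by measurable
qed

lemma tendsto_gauss_dens_at_infinity:
  assumes "0 < \<gamma>"
  shows "(gauss_dens \<gamma> \<longlongrightarrow> 0) (at_infinity :: 'a::euclidean_space filter)"
proof -
  have "((\<lambda>r. exp (- r\<^sup>2 / (2 * \<gamma>))) \<longlongrightarrow> 0) at_top"
    using assms by real_asymp
  then have lim: "((\<lambda>r. gauss_dens \<gamma> (0::'a) * exp (- r\<^sup>2 / (2 * \<gamma>))) \<longlongrightarrow> 0) at_top"
    by (rule tendsto_mult_right_zero)
  have "((\<lambda>z::'a. gauss_dens \<gamma> (0::'a) * exp (- (norm z)\<^sup>2 / (2 * \<gamma>))) \<longlongrightarrow> 0) at_infinity"
    by (rule filterlim_compose[OF lim filterlim_norm_at_top])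
  then show ?thesis
    by (simp only: gauss_dens_eq[symmetric])
qed

definition gauss_grad :: "real \<Rightarrow> 'a::euclidean_space \<Rightarrow> 'a" where
  "gauss_grad \<gamma> z = - (gauss_dens \<gamma> z / \<gamma>) *\<^sub>R z"

lemma gauss_grad_measurable [measurable]:
  "f \<in> borel_measurable M \<Longrightarrow> g \<in> borel_measurable M \<Longrightarrow>
    (\<lambda>x. gauss_grad (f x) (g x :: 'a::euclidean_space)) \<in> borel_measurable M"
  unfolding gauss_grad_def by measurable

lemma has_derivative_gauss_dens:
  assumes "\<gamma> \<noteq> 0"
  shows "(gauss_dens \<gamma> has_derivative (\<lambda>h. gauss_grad \<gamma> z \<bullet> h)) (at (z::'a::euclidean_space))"
proof -
  have "gauss_dens \<gamma> = (\<lambda>w::'a. (2 * pi * \<gamma>) powr (- real DIM('a) / 2) * exp (- (w \<bullet> w) / (2 * \<gamma>)))"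
    by (simp add: fun_eq_iff gauss_dens_def power2_norm_eq_inner)
  then show ?thesis
    using assms by (auto intro!: derivative_eq_intros ext
        simp: gauss_grad_def gauss_dens_def power2_norm_eq_inner inner_commute field_simps)
qed

lemma has_derivative_gauss_grad:
  assumes "\<gamma> \<noteq> 0"
  shows "(gauss_grad \<gamma> has_derivative
     (\<lambda>h. - (1 / \<gamma>) *\<^sub>R ((gauss_grad \<gamma> z \<bullet> h) *\<^sub>R z + gauss_dens \<gamma> z *\<^sub>R h))) (at z)"
proof -
  have "gauss_grad \<gamma> = (\<lambda>w::'a. - (1 / \<gamma>) *\<^sub>R (gauss_dens \<gamma> w *\<^sub>R w))"
    by (simp add: fun_eq_iff gauss_grad_def)
  then show ?thesis
    using assms by (auto intro!: derivative_eq_intros has_derivative_gauss_dens[OF assms]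
        simp: algebra_simps)
qed

lemma norm_gauss_grad: "0 < \<gamma> \<Longrightarrow> norm (gauss_grad \<gamma> z) = gauss_dens \<gamma> z * norm z / \<gamma>"
  using gauss_dens_pos[of \<gamma> z] by (simp add: gauss_grad_def)

lemma gauss_grad_lipschitz:
  assumes "0 < \<gamma>"
  shows "(2 * gauss_dens \<gamma> (0::'a) / \<gamma>)-lipschitz_on UNIV (gauss_grad \<gamma> :: 'a::euclidean_space \<Rightarrow> 'a)"
proof (rule lipschitz_onI)
  let ?G0 = "gauss_dens \<gamma> (0::'a)"
  show "0 \<le> 2 * ?G0 / \<gamma>"
    using assms gauss_dens_pos[OF assms, of "0::'a"] by simp
  have onorm_le: "onorm (\<lambda>h. - (1 / \<gamma>) *\<^sub>R ((gauss_grad \<gamma> z \<bullet> h) *\<^sub>R z + gauss_dens \<gamma> z *\<^sub>R h))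
      \<le> 2 * ?G0 / \<gamma>" for z :: 'a
  proof (rule onorm_bound)
    show "0 \<le> 2 * ?G0 / \<gamma>"
      by fact
    fix h :: 'a
    let ?v = "(gauss_grad \<gamma> z \<bullet> h) *\<^sub>R z + gauss_dens \<gamma> z *\<^sub>R h"
    define r where "r = (norm z)\<^sup>2 / (2 * \<gamma>)"
    have "0 \<le> r"
      using assms by (simp add: r_def)
    have "1 + 2 * r \<le> 2 * exp r"
      using exp_ge_add_one_self[of r] \<open>0 \<le> r\<close> by linarith
    then have "exp (- r) * (1 + 2 * r) \<le> 2"
      by (simp add: exp_minus field_simps)
    then have "gauss_dens \<gamma> z * (1 + 2 * r) \<le> 2 * ?G0"
      using gauss_dens_pos[OF assms, of "0::'a"] gauss_dens_eq[of \<gamma> z]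
      by (simp add: r_def mult.assoc mult.commute[of 2])
    have "norm ?v \<le> norm (gauss_grad \<gamma> z) * norm h * norm z + gauss_dens \<gamma> z * norm h"
      using norm_triangle_ineq[of "(gauss_grad \<gamma> z \<bullet> h) *\<^sub>R z" "gauss_dens \<gamma> z *\<^sub>R h"]
        mult_right_mono[OF Cauchy_Schwarz_ineq2[of "gauss_grad \<gamma> z" h] norm_ge_zero[of z]]
        gauss_dens_pos[OF assms, of z]
      by simp
    also have "\<dots> = gauss_dens \<gamma> z * (1 + 2 * r) * norm h"
      using assms by (simp add: norm_gauss_grad r_def power2_eq_square field_simps)
    also have "\<dots> \<le> 2 * ?G0 * norm h"
      using \<open>gauss_dens \<gamma> z * (1 + 2 * r) \<le> 2 * ?G0\<close> by (simp add: mult_right_mono)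
    finally have "norm ?v / \<gamma> \<le> 2 * ?G0 * norm h / \<gamma>"
      using assms by (simp add: divide_right_mono)
    then show "norm (- (1 / \<gamma>) *\<^sub>R ?v) \<le> 2 * ?G0 / \<gamma> * norm h"
      using assms by simp
  qed
  have "(gauss_grad \<gamma> has_derivative
      (\<lambda>h. - (1 / \<gamma>) *\<^sub>R ((gauss_grad \<gamma> z \<bullet> h) *\<^sub>R z + gauss_dens \<gamma> z *\<^sub>R h))) (at z within UNIV)"
    for z :: 'a
    using assms by (intro has_derivative_gauss_grad) simp
  then have "norm (gauss_grad \<gamma> x - gauss_grad \<gamma> y) \<le> 2 * ?G0 / \<gamma> * norm (x - y)" for x y :: 'a
    by (rule differentiable_bound[OF convex_UNIV _ onorm_le]) simp_all
  then show "dist (gauss_grad \<gamma> x) (gauss_grad \<gamma> y) \<le> 2 * ?G0 / \<gamma> * dist x y" for x y :: 'a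
    by (simp add: dist_norm)
qed

lemma norm_gauss_grad_le:
  assumes "0 < \<gamma>"
  shows "norm (gauss_grad \<gamma> (z::'a::euclidean_space)) \<le> gauss_dens \<gamma> (0::'a) * (1 + 2 * \<gamma>) / \<gamma>"
proof -
  define r where "r = (norm z)\<^sup>2 / (2 * \<gamma>)"
  have "0 \<le> r"
    using assms by (simp add: r_def)
  have "2 * norm z \<le> 1 + (norm z)\<^sup>2"
    using zero_le_power2[of "norm z - 1"] by (simp add: power2_diff)
  then have "norm z \<le> 1 + (norm z)\<^sup>2"
    using norm_ge_zero[of z] by linarith
  also have "\<dots> \<le> (1 + 2 * \<gamma>) * (1 + r)"
    using assms \<open>0 \<le> r\<close> by (simp add: r_def field_simps)
  also have "\<dots> \<le> (1 + 2 * \<gamma>) * exp r"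
    using assms exp_ge_add_one_self[of r] by (intro mult_left_mono) auto
  finally have "exp (- r) * norm z \<le> 1 + 2 * \<gamma>"
    by (simp add: exp_minus field_simps)
  then have "gauss_dens \<gamma> z * norm z \<le> gauss_dens \<gamma> (0::'a) * (1 + 2 * \<gamma>)"
    using gauss_dens_pos[OF assms, of "0::'a"] gauss_dens_eq[of \<gamma> z]
    by (simp add: r_def mult.assoc)
  then show ?thesis
    using assms by (simp add: norm_gauss_grad divide_right_mono)
qed

section \<open>Gaussian smoothing of a probability density\<close>

definition py_grad :: "('a::euclidean_space \<Rightarrow> real) \<Rightarrow> real \<Rightarrow> 'a \<Rightarrow> 'a" where
  "py_grad p \<gamma> y = (\<integral>x. p x *\<^sub>R gauss_grad \<gamma> (y - \<gamma> *\<^sub>R x) \<partial>lborel)"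

locale prob_density =
  fixes p :: "'a::euclidean_space \<Rightarrow> real"
  assumes is_density: "is_density p"
begin

lemma p_measurable [measurable]: "p \<in> borel_measurable borel"
  using is_density by (simp add: is_density_def)

lemma p_nonneg: "0 \<le> p x"
  using is_density by (simp add: is_density_def)

lemma nn_integral_p: "(\<integral>\<^sup>+x. ennreal (p x) \<partial>lborel) = 1"
  using is_density by (simp add: is_density_def)

lemma integrable_p: "integrable lborel p"
  by (rule integrableI_nonneg) (auto simp: p_nonneg nn_integral_p)

lemma integral_p: "(\<integral>x. p x \<partial>lborel) = 1"
  by (subst integral_eq_nn_integral) (simp_all add: p_nonneg nn_integral_p)

lemma py_measurable [measurable]:
  "f \<in> borel_measurable M \<Longrightarrow> g \<in> borel_measurable M \<Longrightarrow> (\<lambda>x. py p (f x) (g x)) \<in> borel_measurable M"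
proof -
  assume [measurable]: "f \<in> borel_measurable M" "g \<in> borel_measurable M"
  show ?thesis
    unfolding py_def by measurable
qed

lemma py_grad_measurable [measurable]:
  "f \<in> borel_measurable M \<Longrightarrow> g \<in> borel_measurable M \<Longrightarrow> (\<lambda>x. py_grad p (f x) (g x)) \<in> borel_measurable M"
proof -
  assume [measurable]: "f \<in> borel_measurable M" "g \<in> borel_measurable M"
  show ?thesis
    unfolding py_grad_def by measurable
qed

lemma integrable_scaleR_bounded:
  fixes f :: "'a \<Rightarrow> 'b::{banach, second_countable_topology}"
  assumes "f \<in> borel_measurable borel" "\<And>x. norm (f x) \<le> B"
  shows "integrable lborel (\<lambda>x. p x *\<^sub>R f x)"
proof (rule Bochner_Integration.integrable_bound)
  show "integrable lborel (\<lambda>x. B * p x)"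
    using integrable_p by simp
  have "0 \<le> B"
    using norm_ge_zero assms(2) order_trans by blast
  then show "AE x in lborel. norm (p x *\<^sub>R f x) \<le> norm (B * p x)"
    using assms(2) p_nonneg by (intro AE_I2) (simp add: abs_mult mult_left_mono mult.commute[of B])
qed (use assms(1) in measurable)

lemma norm_integral_scaleR_le:
  fixes f :: "'a \<Rightarrow> 'b::{banach, second_countable_topology}"
  assumes "f \<in> borel_measurable borel" "\<And>x. norm (f x) \<le> B"
  shows "norm (\<integral>x. p x *\<^sub>R f x \<partial>lborel) \<le> B"
proof -
  have "norm (\<integral>x. p x *\<^sub>R f x \<partial>lborel) \<le> (\<integral>x. B * p x \<partial>lborel)"
    using assms p_nonneg integrable_p
    by (intro Bochner_Integration.integral_norm_bound_integral integrable_scaleR_bounded)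
       (auto simp: mult_left_mono mult.commute[of B])
  then show ?thesis
    by (simp add: integral_p)
qed

lemma integrable_py_integrand:
  "0 < \<gamma> \<Longrightarrow> integrable lborel (\<lambda>x. p x * gauss_dens \<gamma> (y - \<gamma> *\<^sub>R x))"
  using integrable_scaleR_bounded[of "\<lambda>x. gauss_dens \<gamma> (y - \<gamma> *\<^sub>R x)" "gauss_dens \<gamma> (0::'a)"]
  by (simp add: gauss_dens_le_peak less_imp_le[OF gauss_dens_pos])

lemma integrable_py_grad_integrand:
  "0 < \<gamma> \<Longrightarrow> integrable lborel (\<lambda>x. p x *\<^sub>R gauss_grad \<gamma> (y - \<gamma> *\<^sub>R x))"
  by (rule integrable_scaleR_bounded[OF _ norm_gauss_grad_le]) simp_all

lemma py_remainder_le: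
  assumes "0 < \<gamma>"
  shows "\<bar>py p \<gamma> (y + h) - py p \<gamma> y - py_grad p \<gamma> y \<bullet> h\<bar>
    \<le> 2 * gauss_dens \<gamma> (0::'a) / \<gamma> * (norm h)\<^sup>2"
proof -
  let ?R = "\<lambda>z. gauss_dens \<gamma> (z + h) - gauss_dens \<gamma> z - gauss_grad \<gamma> z \<bullet> h"
  have i1: "integrable lborel (\<lambda>x. p x * gauss_dens \<gamma> (y + h - \<gamma> *\<^sub>R x))"
    and i2: "integrable lborel (\<lambda>x. p x * gauss_dens \<gamma> (y - \<gamma> *\<^sub>R x))"
    using assms by (rule integrable_py_integrand)+
  have i3: "integrable lborel (\<lambda>x. (p x *\<^sub>R gauss_grad \<gamma> (y - \<gamma> *\<^sub>R x)) \<bullet> h)"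
    using assms by (intro integrable_inner_left integrable_py_grad_integrand)
  have "(\<integral>x. (p x *\<^sub>R gauss_grad \<gamma> (y - \<gamma> *\<^sub>R x)) \<bullet> h \<partial>lborel) = py_grad p \<gamma> y \<bullet> h"
    unfolding py_grad_def using assms by (intro integral_inner_left integrable_py_grad_integrand)
  then have "py p \<gamma> (y + h) - py p \<gamma> y - py_grad p \<gamma> y \<bullet> h
      = (\<integral>x. p x * gauss_dens \<gamma> (y + h - \<gamma> *\<^sub>R x) - p x * gauss_dens \<gamma> (y - \<gamma> *\<^sub>R x)
          - (p x *\<^sub>R gauss_grad \<gamma> (y - \<gamma> *\<^sub>R x)) \<bullet> h \<partial>lborel)"
    unfolding py_def
    by (simp only: Bochner_Integration.integral_diff[OF Bochner_Integration.integrable_diff[OF i1 i2] i3]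
        Bochner_Integration.integral_diff[OF i1 i2])
  also have "\<dots> = (\<integral>x. p x *\<^sub>R ?R (y - \<gamma> *\<^sub>R x) \<partial>lborel)"
    by (simp add: algebra_simps)
  finally have "\<bar>py p \<gamma> (y + h) - py p \<gamma> y - py_grad p \<gamma> y \<bullet> h\<bar>
      = norm (\<integral>x. p x *\<^sub>R ?R (y - \<gamma> *\<^sub>R x) \<partial>lborel)"
    by simp
  also have "\<dots> \<le> 2 * gauss_dens \<gamma> (0::'a) / \<gamma> * (norm h)\<^sup>2"
    using lipschitz_gradient_remainder_le[OF has_derivative_gauss_dens gauss_grad_lipschitz] assms
    by (intro norm_integral_scaleR_le) simp_all
  finally show ?thesis .
qed

lemma has_derivative_py:
  assumes "0 < \<gamma>"
  shows "(py p \<gamma> has_derivative (\<lambda>h. py_grad p \<gamma> y \<bullet> h)) (at y)"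
  by (rule has_derivative_if_quadratic_remainder[OF bounded_linear_inner_right
        py_remainder_le[OF assms, folded real_norm_def]])

lemma py_grad_lipschitz:
  assumes "0 < \<gamma>"
  shows "(2 * gauss_dens \<gamma> (0::'a) / \<gamma>)-lipschitz_on UNIV (py_grad p \<gamma>)"
proof (rule lipschitz_onI)
  let ?L = "2 * gauss_dens \<gamma> (0::'a) / \<gamma>"
  show "0 \<le> ?L"
    using lipschitz_on_nonneg[OF gauss_grad_lipschitz[OF assms]] .
  fix y y' :: 'a
  have "py_grad p \<gamma> y - py_grad p \<gamma> y'
      = (\<integral>x. p x *\<^sub>R (gauss_grad \<gamma> (y - \<gamma> *\<^sub>R x) - gauss_grad \<gamma> (y' - \<gamma> *\<^sub>R x)) \<partial>lborel)"
    using assms integrable_py_grad_integrand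
    by (simp add: py_grad_def scaleR_diff_right)
  also have "norm \<dots> \<le> ?L * dist y y'"
  proof (rule norm_integral_scaleR_le)
    show "norm (gauss_grad \<gamma> (y - \<gamma> *\<^sub>R x) - gauss_grad \<gamma> (y' - \<gamma> *\<^sub>R x)) \<le> ?L * dist y y'" for x
      using lipschitz_on_normD[OF gauss_grad_lipschitz[OF assms], of "y - \<gamma> *\<^sub>R x" "y' - \<gamma> *\<^sub>R x"]
      by (simp add: dist_norm)
  qed simp
  finally show "dist (py_grad p \<gamma> y) (py_grad p \<gamma> y') \<le> ?L * dist y y'"
    by (simp add: dist_norm)
qed

lemma py_pos:
  assumes "0 < \<gamma>"
  shows "0 < py p \<gamma> y"
proof -
  have integrand_nonneg: "0 \<le> p x * gauss_dens \<gamma> (y - \<gamma> *\<^sub>R x)" for x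
    by (intro mult_nonneg_nonneg p_nonneg less_imp_le[OF gauss_dens_pos[OF assms]])
  have "py p \<gamma> y \<noteq> 0"
  proof
    assume "py p \<gamma> y = 0"
    then have ae: "AE x in lborel. p x * gauss_dens \<gamma> (y - \<gamma> *\<^sub>R x) = 0"
      using integral_nonneg_eq_0_iff_AE[OF integrable_py_integrand[OF assms]] integrand_nonneg
      by (simp add: py_def)
    have "gauss_dens \<gamma> z \<noteq> 0" for z
      using gauss_dens_pos[OF assms, of z] by simp
    then have "AE x in lborel. p x = 0"
      using ae by (auto elim: AE_mp)
    then have "(\<integral>x. p x \<partial>lborel) = 0"
      by (rule integral_eq_zero_AE)
    then show False
      by (simp add: integral_p)
  qed
  moreover have "0 \<le> py p \<gamma> y"
    unfolding py_def using integrand_nonneg by simp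
  ultimately show ?thesis
    by simp
qed

lemma has_derivative_ln_py:
  "0 < \<gamma> \<Longrightarrow>
    ((\<lambda>z. ln (py p \<gamma> z)) has_derivative (\<lambda>h. (py_grad p \<gamma> y /\<^sub>R py p \<gamma> y) \<bullet> h)) (at y)"
  using py_pos[of \<gamma> y]
  by (auto intro!: derivative_eq_intros has_derivative_py ext simp: field_simps)

lemma score_eq:
  assumes "0 < \<gamma>"
  shows "score p \<gamma> y = py_grad p \<gamma> y /\<^sub>R py p \<gamma> y"
  unfolding score_def frechet_derivative_at[OF has_derivative_ln_py[OF assms], symmetric]
  by (simp only: euclidean_representation)

lemma continuous_on_score:
  assumes "0 < \<gamma>"
  shows "continuous_on UNIV (score p \<gamma>)"
proof -
  have "continuous_on UNIV (py p \<gamma>)"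
    using has_derivative_py[OF assms]
    by (intro continuous_at_imp_continuous_on ballI has_derivative_continuous)
  moreover have "continuous_on UNIV (py_grad p \<gamma>)"
    by (rule lipschitz_on_continuous_on[OF py_grad_lipschitz[OF assms]])
  moreover have "py p \<gamma> y \<noteq> 0" for y
    using py_pos[OF assms, of y] by simp
  moreover have "score p \<gamma> = (\<lambda>y. py_grad p \<gamma> y /\<^sub>R py p \<gamma> y)"
    using score_eq[OF assms] by (simp add: fun_eq_iff)
  ultimately show ?thesis
    by (simp only:) (intro continuous_intros, auto)
qed

lemma py_tendsto_0_along_ray:
  assumes "0 < \<gamma>" "v \<noteq> 0"
  shows "(\<lambda>n. py p \<gamma> (real n *\<^sub>R v)) \<longlonglongrightarrow> 0"
proof -
  have "(\<lambda>n. \<integral>x. p x * gauss_dens \<gamma> (real n *\<^sub>R v - \<gamma> *\<^sub>R x) \<partial>lborel) \<longlonglongrightarrow> (\<integral>x. 0 \<partial>(lborel :: 'a measure))"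
  proof (rule Bochner_Integration.integral_dominated_convergence[where w = "\<lambda>x. gauss_dens \<gamma> (0::'a) * p x"
        and f = "\<lambda>x. 0 :: real" and s = "\<lambda>n x. p x * gauss_dens \<gamma> (real n *\<^sub>R v - \<gamma> *\<^sub>R x)"])
    show "integrable lborel (\<lambda>x. gauss_dens \<gamma> (0::'a) * p x)"
      using integrable_p by simp
    show "AE x in lborel. (\<lambda>n. p x * gauss_dens \<gamma> (real n *\<^sub>R v - \<gamma> *\<^sub>R x)) \<longlonglongrightarrow> 0"
    proof (intro AE_I2 tendsto_mult_right_zero)
      fix x
      have "filterlim (\<lambda>n. real n *\<^sub>R v + - \<gamma> *\<^sub>R x) at_infinity sequentially"
        using filterlim_scaleR_real_at_infinity[OF assms(2)]
        by (rule tendsto_add_filterlim_at_infinity'[OF _ tendsto_const])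
      then show "(\<lambda>n. gauss_dens \<gamma> (real n *\<^sub>R v - \<gamma> *\<^sub>R x)) \<longlonglongrightarrow> 0"
        using filterlim_compose[OF tendsto_gauss_dens_at_infinity[OF assms(1)]] by simp
    qed
    fix n
    have "norm (p x * gauss_dens \<gamma> (real n *\<^sub>R v - \<gamma> *\<^sub>R x)) \<le> gauss_dens \<gamma> (0::'a) * p x" for x
      using p_nonneg[of x] gauss_dens_pos[OF assms(1), of "real n *\<^sub>R v - \<gamma> *\<^sub>R x"]
        gauss_dens_le_peak[OF assms(1), of "real n *\<^sub>R v - \<gamma> *\<^sub>R x"]
      by (simp add: abs_mult mult_left_mono mult.commute[of "gauss_dens \<gamma> (0::'a)"])
    then show "AE x in lborel. norm (p x * gauss_dens \<gamma> (real n *\<^sub>R v - \<gamma> *\<^sub>R x))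
        \<le> gauss_dens \<gamma> (0::'a) * p x"
      by simp
  qed simp_all
  then show ?thesis
    by (simp add: py_def)
qed

lemma ln_py_shift_constant:
  assumes "0 < \<gamma>" and periodic: "\<And>y. score p \<gamma> (y + v) = score p \<gamma> y"
  obtains c where "\<And>y. ln (py p \<gamma> (y + v)) - ln (py p \<gamma> y) = c"
proof -
  let ?l = "\<lambda>y. ln (py p \<gamma> y)"
  have "\<exists>c. \<forall>y\<in>UNIV. ?l (y + v) - ?l y = c"
  proof (rule has_derivative_zero_constant[OF convex_UNIV])
    fix y :: 'a
    note ln_py = has_derivative_ln_py[OF assms(1), folded score_eq[OF assms(1)]]
    have "((\<lambda>y. y + v) has_derivative (\<lambda>h. h)) (at y)"
      by (auto intro!: derivative_eq_intros)
    then have "((\<lambda>y. ?l (y + v) - ?l y) has_derivative (\<lambda>h. score p \<gamma> (y + v) \<bullet> h - score p \<gamma> y \<bullet> h)) (at y)"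
      using has_derivative_compose[OF _ ln_py] ln_py by (intro has_derivative_diff)
    then show "((\<lambda>y. ?l (y + v) - ?l y) has_derivative (\<lambda>h. 0)) (at y within UNIV)"
      by (simp add: periodic)
  qed
  then show ?thesis
    using that by blast
qed

lemma score_periodic_imp_zero:
  assumes "0 < \<gamma>" and periodic: "\<And>y. score p \<gamma> (y + v) = score p \<gamma> y"
  shows "v = 0"
proof (rule ccontr)
  assume "v \<noteq> 0"
  let ?l = "\<lambda>y. ln (py p \<gamma> y)"
  obtain c where c: "\<And>y. ?l (y + v) - ?l y = c"
    using ln_py_shift_constant[OF assms] by blast
  \<comment> \<open>\<open>ln py\<close> is affine along the line \<open>\<real> v\<close>, so \<open>py (n v) * py (- n v)\<close> does not depend on \<open>n\<close>\<close>
  have "?l (real n *\<^sub>R v) + ?l (- (real n *\<^sub>R v)) = 2 * ?l 0" for n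
  proof (induction n)
    case (Suc n)
    have "real (Suc n) *\<^sub>R v = real n *\<^sub>R v + v" "- (real n *\<^sub>R v) = - (real (Suc n) *\<^sub>R v) + v"
      by (simp_all add: algebra_simps)
    then show ?case
      using Suc c[of "real n *\<^sub>R v"] c[of "- (real (Suc n) *\<^sub>R v)"] by simp
  qed simp
  moreover have py_ne: "py p \<gamma> y \<noteq> 0" for y
    using py_pos[OF assms(1), of y] by simp
  ultimately have "ln (py p \<gamma> (real n *\<^sub>R v) * py p \<gamma> (real n *\<^sub>R (- v))) = ln ((py p \<gamma> 0)\<^sup>2)" for n
    using py_pos[OF assms(1)] py_ne by (simp add: ln_mult_pos ln_realpow)
  then have "py p \<gamma> (real n *\<^sub>R v) * py p \<gamma> (real n *\<^sub>R (- v)) = (py p \<gamma> 0)\<^sup>2" for n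
    using py_pos[OF assms(1)] py_ne by (subst (asm) ln_inj_iff) simp_all
  moreover have "(\<lambda>n. py p \<gamma> (real n *\<^sub>R v) * py p \<gamma> (real n *\<^sub>R (- v))) \<longlonglongrightarrow> 0 * 0"
    using \<open>v \<noteq> 0\<close> by (intro tendsto_mult py_tendsto_0_along_ray assms(1)) simp_all
  ultimately have "(\<lambda>n. (py p \<gamma> 0)\<^sup>2) \<longlonglongrightarrow> 0"
    by (simp only: mult_zero_left)
  then have "(py p \<gamma> 0)\<^sup>2 = 0"
    by (simp only: LIMSEQ_const_iff)
  then show False
    using py_pos[OF assms(1), of 0] by simp
qed

end

section \<open>The information-estimation metric\<close>

definition score_gap :: "('a::euclidean_space \<Rightarrow> real) \<Rightarrow> 'a \<Rightarrow> 'a \<Rightarrow> real \<Rightarrow> ennreal" where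
  "score_gap p x1 x2 \<gamma> = (\<integral>\<^sup>+w. ennreal (gauss_dens \<gamma> w *
     (norm (score p \<gamma> (\<gamma> *\<^sub>R x1 + w) - score p \<gamma> (\<gamma> *\<^sub>R x2 + w)))\<^sup>2) \<partial>lborel)"

lemma IEM_sq_eq: "IEM_sq p x1 x2 \<Gamma> = (\<integral>\<^sup>+\<gamma>. score_gap p x1 x2 \<gamma> \<partial>restrict_space lborel {0<..\<Gamma>})"
  by (simp add: IEM_sq_def score_gap_def)

lemma IEM_sq_commute: "IEM_sq p x1 x2 \<Gamma> = IEM_sq p x2 x1 \<Gamma>"
  by (simp add: IEM_sq_def norm_minus_commute)

lemma IEM_commute: "IEM p x1 x2 \<Gamma> = IEM p x2 x1 \<Gamma>"
  by (simp add: IEM_def IEM_sq_commute)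

lemma IEM_nonneg: "0 \<le> IEM p x1 x2 \<Gamma>"
  by (simp add: IEM_def)

lemma IEM_self: "IEM p x x \<Gamma> = 0"
  by (simp add: IEM_def IEM_sq_def)

lemma IEM_sq_eq_IEM_squared:
  assumes "IEM_sq p x1 x2 \<Gamma> < \<infinity>"
  shows "IEM_sq p x1 x2 \<Gamma> = ennreal ((IEM p x1 x2 \<Gamma>)\<^sup>2)"
  using assms by (simp add: IEM_def ennreal_enn2real less_top)

context prob_density
begin

lemma score_measurable: "0 < \<gamma> \<Longrightarrow> score p \<gamma> \<in> borel_measurable borel"
  by (rule borel_measurable_continuous_onI[OF continuous_on_score])

lemma score_gap_measurable:
  "(\<lambda>\<gamma>. score_gap p x1 x2 \<gamma>) \<in> borel_measurable (restrict_space lborel {0<..\<Gamma>})"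
proof -
  \<comment> \<open>\<open>score\<close> is a Frechet derivative, out of reach of the measurability prover; on \<open>\<gamma> > 0\<close>
    it agrees with a jointly measurable expression\<close>
  let ?S = "\<lambda>\<gamma> y. py_grad p \<gamma> y /\<^sub>R py p \<gamma> y"
  have "(\<lambda>\<gamma>. \<integral>\<^sup>+w. ennreal (gauss_dens \<gamma> w * (norm (?S \<gamma> (\<gamma> *\<^sub>R x1 + w) - ?S \<gamma> (\<gamma> *\<^sub>R x2 + w)))\<^sup>2) \<partial>lborel)
      \<in> borel_measurable (restrict_space lborel {0<..\<Gamma>})"
    by (rule measurable_restrict_space1) measurable
  then show ?thesis
    by (rule measurable_cong[THEN iffD1, rotated]) (simp add: score_gap_def score_eq)
qed

lemma score_gap_triangle:
  assumes "0 < \<gamma>" "0 < t"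
  shows "score_gap p x1 x3 \<gamma>
    \<le> ennreal (1 + t) * score_gap p x1 x2 \<gamma> + ennreal (1 + 1 / t) * score_gap p x2 x3 \<gamma>"
  unfolding score_gap_def
proof (rule nn_integral_le_weighted_sum)
  note [measurable] = score_measurable[OF assms(1)]
  show "(\<lambda>w. ennreal (gauss_dens \<gamma> w * (norm (score p \<gamma> (\<gamma> *\<^sub>R x1 + w) - score p \<gamma> (\<gamma> *\<^sub>R x2 + w)))\<^sup>2))
      \<in> borel_measurable lborel"
    by measurable
  show "(\<lambda>w. ennreal (gauss_dens \<gamma> w * (norm (score p \<gamma> (\<gamma> *\<^sub>R x2 + w) - score p \<gamma> (\<gamma> *\<^sub>R x3 + w)))\<^sup>2))
      \<in> borel_measurable lborel"
    by measurable
  show "ennreal (gauss_dens \<gamma> w * (norm (score p \<gamma> (\<gamma> *\<^sub>R x1 + w) - score p \<gamma> (\<gamma> *\<^sub>R x3 + w)))\<^sup>2)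
      \<le> ennreal (1 + t) * ennreal (gauss_dens \<gamma> w * (norm (score p \<gamma> (\<gamma> *\<^sub>R x1 + w) - score p \<gamma> (\<gamma> *\<^sub>R x2 + w)))\<^sup>2)
        + ennreal (1 + 1 / t) * ennreal (gauss_dens \<gamma> w * (norm (score p \<gamma> (\<gamma> *\<^sub>R x2 + w) - score p \<gamma> (\<gamma> *\<^sub>R x3 + w)))\<^sup>2)"
    for w
    using gauss_dens_pos[OF assms(1), of w] assms(2)
    by (intro ennreal_scaled_norm_diff_sq_le_weighted) simp_all
qed

lemma IEM_sq_triangle:
  assumes "0 < t"
  shows "IEM_sq p x1 x3 \<Gamma>
    \<le> ennreal (1 + t) * IEM_sq p x1 x2 \<Gamma> + ennreal (1 + 1 / t) * IEM_sq p x2 x3 \<Gamma>"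
  unfolding IEM_sq_eq
  by (rule nn_integral_le_weighted_sum[OF score_gap_measurable score_gap_measurable])
     (simp add: score_gap_triangle assms)

lemma IEM_triangle:
  assumes "IEM_sq p x1 x2 \<Gamma> < \<infinity>" "IEM_sq p x2 x3 \<Gamma> < \<infinity>"
  shows "IEM p x1 x3 \<Gamma> \<le> IEM p x1 x2 \<Gamma> + IEM p x2 x3 \<Gamma>"
proof -
  define Q where "Q x y = enn2real (IEM_sq p x y \<Gamma>)" for x y
  have "sqrt (Q x1 x3) \<le> sqrt (Q x1 x2) + sqrt (Q x2 x3)"
  proof (rule sqrt_le_add_sqrt_if_weighted_bound)
    fix t :: real
    assume "0 < t"
    have "ennreal (Q x1 x3) \<le> IEM_sq p x1 x3 \<Gamma>"
      unfolding Q_def by (cases "IEM_sq p x1 x3 \<Gamma>") simp_all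
    also have "\<dots> \<le> ennreal (1 + t) * ennreal (Q x1 x2) + ennreal (1 + 1 / t) * ennreal (Q x2 x3)"
      using IEM_sq_triangle[OF \<open>0 < t\<close>] assms by (simp add: Q_def ennreal_enn2real less_top)
    also have "\<dots> = ennreal ((1 + t) * Q x1 x2 + (1 + 1 / t) * Q x2 x3)"
      using \<open>0 < t\<close> by (simp add: Q_def ennreal_mult ennreal_plus)
    finally show "Q x1 x3 \<le> (1 + t) * Q x1 x2 + (1 + 1 / t) * Q x2 x3"
      using \<open>0 < t\<close> by (subst (asm) ennreal_le_iff) (simp_all add: Q_def)
  qed (simp_all add: Q_def)
  then show ?thesis
    by (simp add: IEM_def Q_def)
qed

lemma score_gap_eq_0_imp_eq:
  assumes "0 < \<gamma>" "score_gap p x1 x2 \<gamma> = 0"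
  shows "x1 = x2"
proof -
  note [measurable] = score_measurable[OF assms(1)]
  let ?f = "\<lambda>w. gauss_dens \<gamma> w * (norm (score p \<gamma> (\<gamma> *\<^sub>R x1 + w) - score p \<gamma> (\<gamma> *\<^sub>R x2 + w)))\<^sup>2"
  have "(\<lambda>w. ennreal (?f w)) \<in> borel_measurable lborel"
    by measurable
  then have "AE w in lborel. ennreal (?f w) = 0"
    using assms(2) unfolding score_gap_def by (simp only: nn_integral_0_iff_AE)
  moreover have "score p \<gamma> (\<gamma> *\<^sub>R x1 + w) = score p \<gamma> (\<gamma> *\<^sub>R x2 + w)" if "ennreal (?f w) = 0" for w
  proof -
    have "?f w \<le> 0"
      using that by (simp only: ennreal_eq_0_iff)
    then have "(norm (score p \<gamma> (\<gamma> *\<^sub>R x1 + w) - score p \<gamma> (\<gamma> *\<^sub>R x2 + w)))\<^sup>2 \<le> 0"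
      using gauss_dens_pos[OF assms(1), of w] by (simp add: mult_le_0_iff)
    then show ?thesis
      by simp
  qed
  ultimately have ae: "AE w in lborel. score p \<gamma> (\<gamma> *\<^sub>R x1 + w) = score p \<gamma> (\<gamma> *\<^sub>R x2 + w)"
    by (auto elim: AE_mp)
  have cont: "continuous_on UNIV (\<lambda>w. score p \<gamma> (\<gamma> *\<^sub>R x + w))" for x
    by (rule continuous_on_compose2[OF continuous_on_score[OF assms(1)]]) (auto intro: continuous_intros)
  have shifted: "score p \<gamma> (\<gamma> *\<^sub>R x1 + w) = score p \<gamma> (\<gamma> *\<^sub>R x2 + w)" for w
    by (rule continuous_AE_eq_imp_eq[OF cont cont ae])
  have "score p \<gamma> (y + \<gamma> *\<^sub>R (x1 - x2)) = score p \<gamma> y" for y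
    using shifted[of "y - \<gamma> *\<^sub>R x2"] by (simp add: algebra_simps)
  then have "\<gamma> *\<^sub>R (x1 - x2) = 0"
    by (rule score_periodic_imp_zero[OF assms(1)])
  then show ?thesis
    using assms(1) by simp
qed

lemma IEM_sq_eq_0_imp_eq:
  assumes "0 < \<Gamma>" "IEM_sq p x1 x2 \<Gamma> = 0"
  shows "x1 = x2"
proof -
  have "emeasure (restrict_space lborel {0<..\<Gamma>}) (space (restrict_space lborel {0<..\<Gamma>})) \<noteq> 0"
    using assms(1) by (simp add: emeasure_restrict_space)
  moreover have "(\<integral>\<^sup>+\<gamma>. score_gap p x1 x2 \<gamma> \<partial>restrict_space lborel {0<..\<Gamma>}) = 0"
    using assms(2) by (simp add: IEM_sq_eq)
  ultimately obtain \<gamma> where "\<gamma> \<in> space (restrict_space lborel {0<..\<Gamma>})" "score_gap p x1 x2 \<gamma> = 0"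
    using nn_integral_eq_0_obtains_zero[OF score_gap_measurable] by blast
  then show ?thesis
    by (intro score_gap_eq_0_imp_eq[of \<gamma>]) simp_all
qed

lemma IEM_eq_0_iff:
  assumes "0 < \<Gamma>" "IEM_sq p x1 x2 \<Gamma> < \<infinity>"
  shows "IEM p x1 x2 \<Gamma> = 0 \<longleftrightarrow> x1 = x2"
  using IEM_sq_eq_0_imp_eq[OF assms(1)] IEM_sq_eq_IEM_squared[OF assms(2)] IEM_self by auto

end

theorem theorem1:
  fixes p :: "'a::euclidean_space \<Rightarrow> real" and \<Gamma> :: real
  assumes "is_density p"
    and "\<And>x1 x2. IEM_sq p x1 x2 \<Gamma> < \<infinity>"
    and "0 < \<Gamma>"
  shows "\<forall>x1 x2 x3.
           IEM p x1 x2 \<Gamma> = IEM p x2 x1 \<Gamma>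
         \<and> IEM p x1 x2 \<Gamma> \<ge> 0
         \<and> (IEM p x1 x2 \<Gamma> = 0 \<longleftrightarrow> x1 = x2)
         \<and> IEM p x1 x3 \<Gamma> \<le> IEM p x1 x2 \<Gamma> + IEM p x2 x3 \<Gamma>"
proof -
  interpret prob_density p
    by (rule prob_density.intro) (fact assms(1))
  show ?thesis
  proof (intro allI conjI)
    fix x1 x2 x3 :: 'a
    show "IEM p x1 x2 \<Gamma> = IEM p x2 x1 \<Gamma>"
      by (rule IEM_commute)
    show "IEM p x1 x2 \<Gamma> \<ge> 0"
      by (rule IEM_nonneg)
    show "IEM p x1 x2 \<Gamma> = 0 \<longleftrightarrow> x1 = x2"
      by (rule IEM_eq_0_iff[OF assms(3,2)])
    show "IEM p x1 x3 \<Gamma> \<le> IEM p x1 x2 \<Gamma> + IEM p x2 x3 \<Gamma>"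
      by (rule IEM_triangle[OF assms(2,2)])
  qed
qed

end
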